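(* Let $\Delta\geq 3$ be an integer and let $G$ be a triangle-free $\Delta$-regular graph. Then $$\alpha(G)\geq \frac{1}{2}\left(1+\frac{(\Delta-1)(\Delta+1)}{2^{\Delta}\Delta^2+(\Delta-1)(\Delta+1)}\right)\mathrm{diss}(G).$$
   Context: All graphs are finite, simple and undirected. $\alpha(G)$ is the independence number. A set $D$ of vertices is a dissociation set if the induced subgraph $G[D]$ has maximum degree at most $1$; $\mathrm{diss}(G)$ is the maximum order of a dissociation set. *)

theory Defs
  imports Complex_Main
begin

definition simple_graph :: "'a set \<Rightarrow> ('a \<Rightarrow> 'a \<Rightarrow> bool) \<Rightarrow> bool" where
  "simple_graph V E \<longleftrightarrow> finite V \<and> (\<forall>x y. E x y \<longrightarrow> x \<in> V \<and> y \<in> V)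
     \<and> (\<forall>x y. E x y \<longrightarrow> E y x) \<and> (\<forall>x. \<not> E x x)"

definition neighbours :: "'a set \<Rightarrow> ('a \<Rightarrow> 'a \<Rightarrow> bool) \<Rightarrow> 'a \<Rightarrow> 'a set" where
  "neighbours V E v = {u \<in> V. E v u}"

definition regular :: "'a set \<Rightarrow> ('a \<Rightarrow> 'a \<Rightarrow> bool) \<Rightarrow> nat \<Rightarrow> bool" where
  "regular V E d \<longleftrightarrow> (\<forall>v \<in> V. card (neighbours V E v) = d)"

definition triangle_free :: "'a set \<Rightarrow> ('a \<Rightarrow> 'a \<Rightarrow> bool) \<Rightarrow> bool" where
  "triangle_free V E \<longleftrightarrow> \<not> (\<exists>x\<in>V. \<exists>y\<in>V. \<exists>z\<in>V. E x y \<and> E y z \<and> E x z)"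

definition independent_set :: "'a set \<Rightarrow> ('a \<Rightarrow> 'a \<Rightarrow> bool) \<Rightarrow> 'a set \<Rightarrow> bool" where
  "independent_set V E S \<longleftrightarrow> S \<subseteq> V \<and> (\<forall>x\<in>S. \<forall>y\<in>S. \<not> E x y)"

definition dissociation_set :: "'a set \<Rightarrow> ('a \<Rightarrow> 'a \<Rightarrow> bool) \<Rightarrow> 'a set \<Rightarrow> bool" where
  "dissociation_set V E D \<longleftrightarrow> D \<subseteq> V \<and> (\<forall>v\<in>D. card (neighbours D E v) \<le> 1)"

definition alpha :: "'a set \<Rightarrow> ('a \<Rightarrow> 'a \<Rightarrow> bool) \<Rightarrow> nat" where
  "alpha V E = Max (card ` {S. independent_set V E S})"

definition diss :: "'a set \<Rightarrow> ('a \<Rightarrow> 'a \<Rightarrow> bool) \<Rightarrow> nat" where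
  "diss V E = Max (card ` {D. dissociation_set V E D})"

end

theory Submission
  imports Defs
begin

text \<open>
  Fix a dissociation set \<open>D\<close>; it splits into the set \<open>I\<close> of vertices isolated in \<open>G[D]\<close> and the
  vertices of a matching with \<open>m\<close> edges, so \<open>|D| = |I| + 2m\<close>. Choosing one endpoint of every
  matching edge uniformly at random gives an independent set of size \<open>|I| + m\<close> inside \<open>D\<close>. A vertex
  \<open>w\<close> outside \<open>D\<close> without neighbours in \<open>I\<close> and with \<open>k\<close> neighbours in the matching has no
  neighbour among the chosen endpoints with probability \<open>2\<^sup>-\<^sup>k\<close>, because by triangle-freeness it
  sees at most one endpoint of each matching edge. Such free vertices have at most \<open>\<Delta> - k\<close>
  neighbours among themselves, so Caro-Wei extends the independent set by
  \<open>\<Sum> 1 / ((\<Delta> - k + 1) 2\<^sup>k) \<ge> \<Sum> k / (2\<^sup>\<Delta> \<Delta>)\<close> in expectation. Counting the \<open>2m(\<Delta> - 1)\<close> edges from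
  the matching to the outside, at most \<open>|I| \<Delta> (\<Delta> - 1)\<close> of which end at neighbours of \<open>I\<close>,
  shows that the gain is large whenever \<open>m\<close> is large compared to \<open>|I|\<close>.
\<close>

lemma caro_wei_degree_bound:
  fixes F :: "'a set" and b :: "'a \<Rightarrow> nat" and E :: "'a \<Rightarrow> 'a \<Rightarrow> bool"
  assumes "finite F" and "\<And>w. w \<in> F \<Longrightarrow> card {u\<in>F. E w u} \<le> b w"
    and sym: "\<And>x y. E x y \<Longrightarrow> E y x" and irrefl: "\<And>x. \<not> E x x"
  shows "\<exists>S\<subseteq>F. (\<forall>x\<in>S. \<forall>y\<in>S. \<not> E x y) \<and> (\<Sum>w\<in>F. 1 / (real (b w) + 1)) \<le> real (card S)"
  using assms(1,2)
proof (induction "card F" arbitrary: F rule: less_induct)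
  case less
  show ?case
  proof (cases "F = {}")
    case True
    then show ?thesis by auto
  next
    case False
    then obtain v where v: "v \<in> F" and v_min: "\<And>u. u \<in> F \<Longrightarrow> b v \<le> b u"
      using ex_has_least_nat[of "\<lambda>v. v \<in> F" _ b] by blast
    define N where "N = insert v {u\<in>F. E v u}"
    define F' where "F' = F - N"
    have N_F: "N \<subseteq> F" using v unfolding N_def by auto
    have fin_F': "finite F'" using less.prems(1) unfolding F'_def by simp
    have smaller: "card F' < card F"
      using less.prems(1) v unfolding F'_def N_def by (intro psubset_card_mono) auto
    have deg': "card {u\<in>F'. E w u} \<le> b w" if "w \<in> F'" for w
    proof -
      have "card {u\<in>F'. E w u} \<le> card {u\<in>F. E w u}"
        using less.prems(1) unfolding F'_def by (intro card_mono) auto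
      then show ?thesis using less.prems(2) that unfolding F'_def by fastforce
    qed
    obtain S' where S': "S' \<subseteq> F'" "\<forall>x\<in>S'. \<forall>y\<in>S'. \<not> E x y"
      "(\<Sum>w\<in>F'. 1 / (real (b w) + 1)) \<le> real (card S')"
      using less.hyps[OF smaller fin_F' deg'] by blast
    have sub: "insert v S' \<subseteq> F" using S'(1) v unfolding F'_def by auto
    have indep: "\<forall>x\<in>insert v S'. \<forall>y\<in>insert v S'. \<not> E x y"
    proof -
      have "\<not> E v y" if "y \<in> S'" for y
        using that S'(1) unfolding F'_def N_def by auto
      then show ?thesis using S'(2) irrefl sym by blast
    qed
    have N_gain: "(\<Sum>w\<in>N. 1 / (real (b w) + 1)) \<le> 1"
    proof -
      have "(\<Sum>w\<in>N. 1 / (real (b w) + 1)) \<le> (\<Sum>w\<in>N. 1 / (real (b v) + 1))"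
        using v_min N_F by (intro sum_mono divide_left_mono) auto
      also have "\<dots> = real (card N) / (real (b v) + 1)" by simp
      also have "\<dots> \<le> 1"
        using less.prems(2)[OF v] irrefl finite_subset[OF N_F less.prems(1)]
        unfolding N_def by simp
      finally show ?thesis .
    qed
    have "card (insert v S') = card S' + 1"
      using S'(1) finite_subset[OF S'(1) fin_F'] unfolding F'_def N_def
      by (subst card_insert_disjoint) auto
    moreover have "(\<Sum>w\<in>F. 1 / (real (b w) + 1))
        = (\<Sum>w\<in>F'. 1 / (real (b w) + 1)) + (\<Sum>w\<in>N. 1 / (real (b w) + 1))"
      using sum.subset_diff[OF N_F less.prems(1)] unfolding F'_def by simp
    ultimately have "(\<Sum>w\<in>F. 1 / (real (b w) + 1)) \<le> real (card (insert v S'))"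
      using S'(3) N_gain by simp
    then show ?thesis using sub indep by blast
  qed
qed

lemma card_subsets_avoiding_containing:
  assumes "finite U" "A \<subseteq> U" "B \<subseteq> U" "A \<inter> B = {}"
  shows "card {Y. Y \<subseteq> U \<and> Y \<inter> A = {} \<and> B \<subseteq> Y} = 2 ^ (card U - card A - card B)"
proof -
  have "{Y. Y \<subseteq> U \<and> Y \<inter> A = {} \<and> B \<subseteq> Y} = (\<lambda>Z. Z \<union> B) ` Pow (U - A - B)"
  proof (intro equalityI subsetI)
    fix Y assume "Y \<in> {Y. Y \<subseteq> U \<and> Y \<inter> A = {} \<and> B \<subseteq> Y}"
    then have "Y = (Y - B) \<union> B" "Y - B \<in> Pow (U - A - B)" by auto
    then show "Y \<in> (\<lambda>Z. Z \<union> B) ` Pow (U - A - B)" by blast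
  qed (use assms in auto)
  moreover have "inj_on (\<lambda>Z. Z \<union> B) (Pow (U - A - B))"
    by (rule inj_onI) auto
  ultimately have "card {Y. Y \<subseteq> U \<and> Y \<inter> A = {} \<and> B \<subseteq> Y} = 2 ^ card (U - A - B)"
    using assms(1) by (simp add: card_image card_Pow)
  moreover have "card (U - A - B) = card (U - A) - card B"
    using assms by (intro card_Diff_subset) (auto intro: finite_subset)
  moreover have "card (U - A) = card U - card A"
    using assms by (intro card_Diff_subset) (auto intro: finite_subset)
  ultimately show ?thesis by simp
qed

lemma involution_transversal:
  assumes "finite M" and "\<And>v. v \<in> M \<Longrightarrow> p v \<in> M"
    and "\<And>v. v \<in> M \<Longrightarrow> p (p v) = v" and "\<And>v. v \<in> M \<Longrightarrow> p v \<noteq> v"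
  shows "\<exists>U\<subseteq>M. U \<inter> p ` U = {} \<and> M = U \<union> p ` U"
proof -
  obtain f :: "'a \<Rightarrow> nat" where f: "inj_on f M"
    using finite_imp_inj_to_nat_seg[OF assms(1)] by blast
  define U where "U = {v\<in>M. f v < f (p v)}"
  have "U \<subseteq> M" unfolding U_def by auto
  moreover have "U \<inter> p ` U = {}" using assms(3) unfolding U_def by fastforce
  moreover have "M \<subseteq> U \<union> p ` U"
  proof
    fix v assume v: "v \<in> M"
    then have "f v \<noteq> f (p v)" using f assms(2,4) by (metis inj_onD)
    then consider "f v < f (p v)" | "f (p v) < f v" by linarith
    then show "v \<in> U \<union> p ` U"
    proof cases
      case 2
      then have "p v \<in> U" using v assms(2,3) unfolding U_def by auto
      then show ?thesis using assms(3)[OF v] by (metis UnI2 image_eqI)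
    qed (use v U_def in auto)
  qed
  moreover have "U \<union> p ` U \<subseteq> M" using assms(2) unfolding U_def by auto
  ultimately show ?thesis by (intro exI[of _ U]) auto
qed

lemma degree_weight_bound:
  fixes k \<Delta> :: nat
  assumes "k \<le> \<Delta>" "\<Delta> \<ge> 1"
  shows "real k / (2 ^ \<Delta> * real \<Delta>) \<le> 1 / ((real (\<Delta> - k) + 1) * 2 ^ k)"
proof -
  obtain j where j: "\<Delta> = k + j" using assms(1) le_Suc_ex by blast
  have "real j + 1 \<le> 2 ^ j" by (induction j) auto
  then have "real k * ((real j + 1) * 2 ^ k) \<le> real \<Delta> * (2 ^ j * 2 ^ k)"
    using j by (intro mult_mono) auto
  also have "\<dots> = 2 ^ \<Delta> * real \<Delta>" using j by (simp add: power_add)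
  finally have "real k * ((real (\<Delta> - k) + 1) * 2 ^ k) \<le> 2 ^ \<Delta> * real \<Delta>" using j by simp
  moreover have "(real (\<Delta> - k) + 1) * 2 ^ k > 0" "2 ^ \<Delta> * real \<Delta> > 0" using assms by auto
  ultimately show ?thesis by (simp add: field_simps)
qed

lemma four_mult_le_power_two: "n \<ge> 3 \<Longrightarrow> 4 * (n - 1) \<le> (2::nat) ^ n"
  by (induction n rule: nat_induct_at_least) auto

lemma dissociation_coefficient_bounds:
  fixes d P :: real
  assumes d: "d \<ge> 3" and P: "P \<ge> 4 * (d - 1)"
  defines "K \<equiv> P * d^2 + (d - 1) * (d + 1)"
  shows "1/2 * (1 + (d - 1) * (d + 1) / K) \<le> 1 - (d - 1) / P"
    and "1 + (d - 1) * (d + 1) / K \<le> 1 + 2 * (d - 1) / (P * d)"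
proof -
  have "(d - 1) * (d + 1) \<le> d^2" by (simp add: power2_eq_square algebra_simps)
  also have "d^2 \<le> P * d^2" using d P by (simp add: mult_le_cancel_right1)
  finally have q: "(d - 1) * (d + 1) \<le> P * d^2" .
  have "P > 0" using d P by simp
  have "K > 0" unfolding K_def using d \<open>P > 0\<close> by (intro add_pos_pos) auto
  have "2 * (d - 1) * K \<le> 2 * (d - 1) * (2 * (P * d^2))"
    using q d unfolding K_def by (intro mult_left_mono) auto
  also have "\<dots> = (4 * (d - 1)) * (P * d^2)" by simp
  also have "\<dots> \<le> P * (P * d^2)" using P \<open>P > 0\<close> by (intro mult_right_mono) auto
  finally have "2 * (d - 1) * K \<le> P * (P * d^2)" .
  then show "1/2 * (1 + (d - 1) * (d + 1) / K) \<le> 1 - (d - 1) / P"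
    using \<open>P > 0\<close> \<open>K > 0\<close> unfolding K_def by (simp add: field_simps)
  have "(d + 1) * (P * d) \<le> 2 * (P * d^2)"
    using d \<open>P > 0\<close> by (simp add: power2_eq_square algebra_simps)
  also have "\<dots> \<le> 2 * K" unfolding K_def using d by simp
  finally have "(d - 1) * ((d + 1) * (P * d)) \<le> (d - 1) * (2 * K)"
    using d by (intro mult_left_mono) auto
  then show "1 + (d - 1) * (d + 1) / K \<le> 1 + 2 * (d - 1) / (P * d)"
    using \<open>P > 0\<close> \<open>K > 0\<close> d by (simp add: field_simps)
qed

lemma dissociation_coefficient_le:
  fixes x m d P a :: real
  assumes "d \<ge> 3" "P \<ge> 4 * (d - 1)" "x \<ge> 0" "m \<ge> 0"
    and "x + m + (2 * m * (d - 1) - x * d * (d - 1)) / (P * d) \<le> a"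
  shows "1/2 * (1 + (d - 1) * (d + 1) / (P * d^2 + (d - 1) * (d + 1))) * (x + 2 * m) \<le> a"
proof -
  define c where "c = 1/2 * (1 + (d - 1) * (d + 1) / (P * d^2 + (d - 1) * (d + 1)))"
  have c1: "c \<le> 1 - (d - 1) / P"
    unfolding c_def by (rule dissociation_coefficient_bounds(1)[OF assms(1,2)])
  have "2 * c = 1 + (d - 1) * (d + 1) / (P * d^2 + (d - 1) * (d + 1))"
    unfolding c_def by simp
  then have c2: "2 * c \<le> 1 + 2 * (d - 1) / (P * d)"
    using dissociation_coefficient_bounds(2)[OF assms(1,2)] by linarith
  have "c * (x + 2 * m) = x * c + m * (2 * c)" by (simp add: algebra_simps)
  also have "\<dots> \<le> x * (1 - (d - 1) / P) + m * (1 + 2 * (d - 1) / (P * d))"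
    using c1 c2 assms(3,4) by (intro add_mono mult_left_mono)
  also have "\<dots> = x + m + (2 * m * (d - 1) - x * d * (d - 1)) / (P * d)"
    using assms(1,2) by (simp add: field_simps)
  finally show ?thesis using assms(5) unfolding c_def by linarith
qed

locale fin_simple_graph =
  fixes V :: "'a set" and E :: "'a \<Rightarrow> 'a \<Rightarrow> bool"
  assumes simple: "simple_graph V E"
begin

lemma finite_V: "finite V"
  and edge_in_V: "E x y \<Longrightarrow> x \<in> V \<and> y \<in> V"
  and edge_sym: "E x y \<Longrightarrow> E y x"
  and no_loop: "\<not> E x x"
  using simple unfolding simple_graph_def by auto

lemma card_le_alpha:
  assumes "S \<subseteq> V" "\<forall>x\<in>S. \<forall>y\<in>S. \<not> E x y"
  shows "card S \<le> alpha V E"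
proof -
  have "{S. independent_set V E S} \<subseteq> Pow V" by (auto simp: independent_set_def)
  then have "finite {S. independent_set V E S}" using finite_V by (simp add: finite_subset)
  moreover have "independent_set V E S" using assms by (simp add: independent_set_def)
  ultimately show ?thesis unfolding alpha_def by (intro Max_ge finite_imageI) auto
qed

lemma diss_attained:
  obtains D where "dissociation_set V E D" "card D = diss V E"
proof -
  have "{D. dissociation_set V E D} \<subseteq> Pow V" by (auto simp: dissociation_set_def)
  then have "finite {D. dissociation_set V E D}" using finite_V by (simp add: finite_subset)
  moreover have "dissociation_set V E {}" by (simp add: dissociation_set_def)
  ultimately have "diss V E \<in> card ` {D. dissociation_set V E D}"
    unfolding diss_def by (intro Max_in finite_imageI) auto
  then show ?thesis using that by auto
qed

end

locale tf_regular_graph = fin_simple_graph +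
  fixes \<Delta> :: nat
  assumes triangle_free: "triangle_free V E"
    and regular: "regular V E \<Delta>"
begin

lemma card_nbrs: "v \<in> V \<Longrightarrow> card {u\<in>V. E v u} = \<Delta>"
  using regular unfolding regular_def neighbours_def by auto

end

locale tf_regular_dissociation = tf_regular_graph +
  fixes D :: "'a set"
  assumes dissociation: "dissociation_set V E D"
begin

lemma D_subset_V: "D \<subseteq> V"
  using dissociation unfolding dissociation_set_def by auto

lemma finite_D: "finite D"
  using finite_subset[OF D_subset_V finite_V] .

lemma nbr_in_D_unique:
  assumes "v \<in> D" "u \<in> D" "u' \<in> D" "E v u" "E v u'"
  shows "u = u'"
proof -
  have "card (neighbours D E v) \<le> Suc 0"
    using dissociation assms(1) unfolding dissociation_set_def by auto
  then show ?thesis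
    using assms finite_D card_le_Suc0_iff_eq[of "neighbours D E v"]
    unfolding neighbours_def by auto
qed

definition isolated :: "'a set" where
  "isolated = {v\<in>D. \<forall>u\<in>D. \<not> E v u}"

definition matched :: "'a set" where
  "matched = D - isolated"

definition partner :: "'a \<Rightarrow> 'a" where
  "partner v = (THE u. u \<in> D \<and> E v u)"

lemma matched_subset_D: "matched \<subseteq> D"
  unfolding matched_def by auto

lemma finite_matched: "finite matched"
  using finite_subset[OF matched_subset_D finite_D] .

lemma partner_in_D: "v \<in> matched \<Longrightarrow> partner v \<in> D"
  and edge_partner: "v \<in> matched \<Longrightarrow> E v (partner v)"
proof -
  assume "v \<in> matched"
  then have "\<exists>!u. u \<in> D \<and> E v u"
    using nbr_in_D_unique unfolding matched_def isolated_def by blast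
  then have "partner v \<in> D \<and> E v (partner v)"
    unfolding partner_def by (rule theI')
  then show "partner v \<in> D" "E v (partner v)" by auto
qed

lemma partner_unique: "v \<in> matched \<Longrightarrow> u \<in> D \<Longrightarrow> E v u \<Longrightarrow> u = partner v"
  using nbr_in_D_unique partner_in_D edge_partner matched_subset_D by blast

lemma partner_in_matched: "v \<in> matched \<Longrightarrow> partner v \<in> matched"
  using partner_in_D edge_partner edge_sym matched_subset_D
  unfolding matched_def isolated_def by blast

lemma partner_partner: "v \<in> matched \<Longrightarrow> partner (partner v) = v"
  using partner_unique[OF partner_in_matched] edge_partner edge_sym matched_subset_D
  by (metis subsetD)

lemma inj_on_partner: "inj_on partner matched"
  by (metis inj_onI partner_partner)

definition half :: "'a set" where
  "half = (SOME U. U \<subseteq> matched \<and> U \<inter> partner ` U = {} \<and> matched = U \<union> partner ` U)"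

lemma half_subset: "half \<subseteq> matched"
  and half_disjoint: "half \<inter> partner ` half = {}"
  and matched_eq: "matched = half \<union> partner ` half"
proof -
  have "\<exists>U\<subseteq>matched. U \<inter> partner ` U = {} \<and> matched = U \<union> partner ` U"
    using finite_matched partner_in_matched partner_partner edge_partner no_loop
    by (intro involution_transversal) metis+
  then have "half \<subseteq> matched \<and> half \<inter> partner ` half = {} \<and> matched = half \<union> partner ` half"
    unfolding half_def by (rule someI_ex)
  then show "half \<subseteq> matched" "half \<inter> partner ` half = {}" "matched = half \<union> partner ` half"
    by auto
qed

lemma finite_half: "finite half"
  using finite_subset[OF half_subset finite_matched] .

lemma card_partner_image: "A \<subseteq> half \<Longrightarrow> card (partner ` A) = card A"
  using half_subset by (intro card_image inj_on_subset[OF inj_on_partner]) auto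

lemma card_matched: "card matched = 2 * card half"
  using matched_eq half_disjoint finite_half card_partner_image[of half]
  by (simp add: card_Un_disjoint)

lemma card_D: "card D = card isolated + 2 * card half"
proof -
  have "isolated \<subseteq> D" unfolding isolated_def by auto
  then have "card matched = card D - card isolated" "card isolated \<le> card D"
    unfolding matched_def using finite_D by (auto simp: card_Diff_subset finite_subset card_mono)
  then show ?thesis using card_matched by simp
qed

text \<open>Choosing \<open>Y \<subseteq> half\<close> amounts to choosing one endpoint of every matching edge.\<close>

definition pick :: "'a set \<Rightarrow> 'a set" where
  "pick Y = Y \<union> partner ` (half - Y)"

lemma pick_subset: "Y \<subseteq> half \<Longrightarrow> pick Y \<subseteq> matched"
  unfolding pick_def using half_subset partner_in_matched by auto

lemma card_pick: "Y \<subseteq> half \<Longrightarrow> card (pick Y) = card half"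
proof -
  assume Y: "Y \<subseteq> half"
  have "card (pick Y) = card Y + card (half - Y)"
    unfolding pick_def using Y half_disjoint finite_half finite_subset[OF Y]
    by (subst card_Un_disjoint) (auto simp: card_partner_image)
  then show ?thesis
    using Y finite_half by (simp add: card_Diff_subset finite_subset card_mono)
qed

lemma partner_notin_pick:
  assumes Y: "Y \<subseteq> half" and x: "x \<in> pick Y"
  shows "partner x \<notin> pick Y"
proof
  assume px: "partner x \<in> pick Y"
  from x consider (chosen) "x \<in> Y" | (other) u where "u \<in> half - Y" "x = partner u"
    unfolding pick_def by auto
  then show False
  proof cases
    case chosen
    then have "partner x \<notin> Y" using Y half_disjoint by auto
    then obtain u where u: "u \<in> half - Y" "partner x = partner u"
      using px unfolding pick_def by auto
    then have "x = u" using inj_on_partner Y half_subset chosen by (auto dest: inj_onD)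
    then show False using chosen u by simp
  next
    case other
    then have "partner x = u" using partner_partner half_subset by auto
    then show False using px other half_disjoint unfolding pick_def by auto
  qed
qed

lemma independent_isolated_pick:
  assumes Y: "Y \<subseteq> half" and "x \<in> isolated \<union> pick Y" "y \<in> isolated \<union> pick Y"
  shows "\<not> E x y"
proof
  assume e: "E x y"
  have D: "x \<in> D" "y \<in> D"
    using assms pick_subset matched_subset_D unfolding isolated_def by auto
  then have "x \<notin> isolated" "y \<notin> isolated"
    using e edge_sym unfolding isolated_def by blast+
  then have "x \<in> pick Y" "y \<in> pick Y" using assms by auto
  moreover have "y = partner x"
    using partner_unique pick_subset[OF Y] \<open>x \<in> pick Y\<close> D(2) e by auto
  ultimately show False using partner_notin_pick[OF Y] by auto
qed

definition candidates :: "'a set" where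
  "candidates = {w \<in> V - D. \<forall>z. E w z \<longrightarrow> z \<notin> isolated}"

definition free :: "'a set \<Rightarrow> 'a set" where
  "free Y = {w \<in> candidates. \<forall>z. E w z \<longrightarrow> z \<notin> pick Y}"

definition mdeg :: "'a \<Rightarrow> nat" where
  "mdeg w = card {z\<in>matched. E w z}"

lemma finite_candidates: "finite candidates"
  using finite_V unfolding candidates_def by auto

lemma mdeg_le:
  assumes "w \<in> V"
  shows "mdeg w \<le> \<Delta>"
proof -
  have "{z\<in>matched. E w z} \<subseteq> {u\<in>V. E w u}"
    using matched_subset_D D_subset_V by auto
  moreover have "finite {u\<in>V. E w u}" using finite_V by simp
  ultimately show ?thesis unfolding mdeg_def using card_mono card_nbrs[OF assms] by metis
qed

lemma card_free_nbrs:
  assumes "w \<in> free Y"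
  shows "card {u\<in>free Y. E w u} \<le> \<Delta> - mdeg w"
proof -
  have w: "w \<in> V" using assms unfolding free_def candidates_def by auto
  have sub: "{z\<in>matched. E w z} \<subseteq> {u\<in>V. E w u}"
    using matched_subset_D D_subset_V by auto
  have "{u\<in>free Y. E w u} \<subseteq> {u\<in>V. E w u} - {z\<in>matched. E w z}"
    using matched_subset_D unfolding free_def candidates_def by auto
  then have "card {u\<in>free Y. E w u} \<le> card ({u\<in>V. E w u} - {z\<in>matched. E w z})"
    using finite_V by (intro card_mono) auto
  also have "\<dots> = \<Delta> - mdeg w"
    unfolding mdeg_def using sub finite_V card_nbrs[OF w]
    by (simp add: card_Diff_subset finite_subset)
  finally show ?thesis .
qed

lemma alpha_ge_pick_free:
  assumes Y: "Y \<subseteq> half"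
  shows "real (card isolated) + real (card half) + (\<Sum>w\<in>free Y. 1 / (real (\<Delta> - mdeg w) + 1))
    \<le> real (alpha V E)"
proof -
  have "free Y \<subseteq> candidates" unfolding free_def by auto
  then have fin: "finite (free Y)" using finite_candidates finite_subset by blast
  obtain S where S: "S \<subseteq> free Y" "\<forall>x\<in>S. \<forall>y\<in>S. \<not> E x y"
      "(\<Sum>w\<in>free Y. 1 / (real (\<Delta> - mdeg w) + 1)) \<le> real (card S)"
    using caro_wei_degree_bound[OF fin card_free_nbrs edge_sym no_loop] by blast
  define T where "T = isolated \<union> pick Y"
  have T_D: "T \<subseteq> D"
    using pick_subset[OF Y] matched_subset_D unfolding T_def isolated_def by auto
  have S_out: "S \<subseteq> V - D" using S(1) unfolding free_def candidates_def by auto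
  have card_T: "card T = card isolated + card half"
  proof -
    have "isolated \<inter> pick Y = {}" using pick_subset[OF Y] unfolding matched_def by auto
    moreover have "finite isolated" "finite (pick Y)"
      using T_D finite_D finite_subset unfolding T_def by auto
    ultimately show ?thesis unfolding T_def by (simp add: card_Un_disjoint card_pick[OF Y])
  qed
  have "\<not> E w z" if "w \<in> S" "z \<in> T" for w z
    using that S(1) unfolding free_def candidates_def T_def by auto
  then have "\<forall>x\<in>T \<union> S. \<forall>y\<in>T \<union> S. \<not> E x y"
    using independent_isolated_pick[OF Y] S(2) edge_sym unfolding T_def by (metis Un_iff)
  then have "card (T \<union> S) \<le> alpha V E"
    using T_D S_out D_subset_V by (intro card_le_alpha) auto
  moreover have "card (T \<union> S) = card T + card S"
    using T_D S_out finite_D finite_V by (intro card_Un_disjoint) (auto intro: finite_subset)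
  ultimately show ?thesis using S(3) card_T by linarith
qed

lemma mdeg_split:
  "mdeg w = card {u\<in>half. E w u} + card {u\<in>half. E w (partner u)}"
proof -
  have "{z\<in>matched. E w z} = {u\<in>half. E w u} \<union> partner ` {u\<in>half. E w (partner u)}"
    using matched_eq by auto
  moreover have "{u\<in>half. E w u} \<inter> partner ` {u\<in>half. E w (partner u)} = {}"
    using half_disjoint by auto
  ultimately show ?thesis
    unfolding mdeg_def using finite_half card_partner_image[of "{u\<in>half. E w (partner u)}"]
    by (simp add: card_Un_disjoint)
qed

text \<open>A vertex adjacent to both ends of a matching edge would close a triangle.\<close>

lemma nbrs_half_disjoint:
  assumes "w \<in> V"
  shows "{u\<in>half. E w u} \<inter> {u\<in>half. E w (partner u)} = {}"
  using assms triangle_free edge_partner edge_in_V half_subset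
  unfolding triangle_free_def by blast

lemma mdeg_le_card_half:
  assumes "w \<in> V"
  shows "mdeg w \<le> card half"
proof -
  have "mdeg w = card ({u\<in>half. E w u} \<union> {u\<in>half. E w (partner u)})"
    unfolding mdeg_split using finite_half nbrs_half_disjoint[OF assms]
    by (simp add: card_Un_disjoint)
  also have "\<dots> \<le> card half" using finite_half by (intro card_mono) auto
  finally show ?thesis .
qed

lemma card_choices_free:
  assumes w: "w \<in> candidates"
  shows "card {Y\<in>Pow half. w \<in> free Y} = 2 ^ (card half - mdeg w)"
proof -
  have "w \<in> free Y \<longleftrightarrow> Y \<inter> {u\<in>half. E w u} = {} \<and> {u\<in>half. E w (partner u)} \<subseteq> Y"
    if "Y \<subseteq> half" for Y
    using w that unfolding free_def pick_def by blast
  then have "{Y\<in>Pow half. w \<in> free Y}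
      = {Y. Y \<subseteq> half \<and> Y \<inter> {u\<in>half. E w u} = {} \<and> {u\<in>half. E w (partner u)} \<subseteq> Y}"
    by auto
  moreover have "w \<in> V" using w unfolding candidates_def by auto
  ultimately show ?thesis
    by (simp add: card_subsets_avoiding_containing finite_half nbrs_half_disjoint mdeg_split)
qed

lemma alpha_ge_average:
  "real (card isolated) + real (card half)
      + (\<Sum>w\<in>candidates. 1 / ((real (\<Delta> - mdeg w) + 1) * 2 ^ mdeg w))
    \<le> real (alpha V E)"
proof -
  define h where "h w = 1 / (real (\<Delta> - mdeg w) + 1)" for w
  define c where "c = real (card isolated) + real (card half)"
  define N :: real where "N = 2 ^ card half"
  have sum_free: "(\<Sum>Y\<in>Pow half. \<Sum>w\<in>free Y. h w) = N * (\<Sum>w\<in>candidates. h w / 2 ^ mdeg w)"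
  proof -
    have "(\<Sum>Y\<in>Pow half. \<Sum>w\<in>free Y. h w) = (\<Sum>w\<in>candidates. \<Sum>Y\<in>{Y\<in>Pow half. w \<in> free Y}. h w)"
      using sum.swap_restrict[of "Pow half" candidates "\<lambda>_. h" "\<lambda>Y w. w \<in> free Y"]
        finite_half finite_candidates
      by (simp add: free_def Collect_conj_eq Int_absorb2 flip: Collect_mem_eq)
    also have "\<dots> = (\<Sum>w\<in>candidates. N * (h w / 2 ^ mdeg w))"
    proof (rule sum.cong[OF refl])
      fix w assume w: "w \<in> candidates"
      then have "mdeg w \<le> card half" using mdeg_le_card_half unfolding candidates_def by auto
      then have "N = 2 ^ (card half - mdeg w) * 2 ^ mdeg w" unfolding N_def by (simp flip: power_add)
      then show "(\<Sum>Y\<in>{Y\<in>Pow half. w \<in> free Y}. h w) = N * (h w / 2 ^ mdeg w)"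
        using card_choices_free[OF w] by simp
    qed
    finally show ?thesis by (simp add: sum_distrib_left)
  qed
  have "(\<Sum>Y\<in>Pow half. c + (\<Sum>w\<in>free Y. h w)) \<le> (\<Sum>Y\<in>Pow half. real (alpha V E))"
    using alpha_ge_pick_free unfolding c_def h_def by (intro sum_mono) auto
  then have "N * (c + (\<Sum>w\<in>candidates. h w / 2 ^ mdeg w)) \<le> N * real (alpha V E)"
    using finite_half sum_free by (simp add: sum.distrib card_Pow N_def algebra_simps)
  then show ?thesis unfolding c_def h_def N_def by (simp add: mult_le_cancel_left_pos)
qed

lemma sum_mdeg_outside: "(\<Sum>w\<in>V - D. mdeg w) = 2 * card half * (\<Delta> - 1)"
proof -
  have "card {w\<in>V - D. E w z} = \<Delta> - 1" if z: "z \<in> matched" for z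
  proof -
    have "{w\<in>V - D. E w z} = {u\<in>V. E z u} - {partner z}"
    proof (intro equalityI subsetI)
      fix w assume "w \<in> {w\<in>V - D. E w z}"
      then show "w \<in> {u\<in>V. E z u} - {partner z}" using partner_in_D[OF z] edge_sym by auto
    next
      fix u assume u: "u \<in> {u\<in>V. E z u} - {partner z}"
      then have "u \<notin> D" using partner_unique[OF z] by auto
      then show "u \<in> {w\<in>V - D. E w z}" using u edge_sym by auto
    qed
    moreover have "partner z \<in> {u\<in>V. E z u}"
      using partner_in_D[OF z] edge_partner[OF z] D_subset_V by auto
    ultimately show ?thesis
      using z card_nbrs matched_subset_D D_subset_V by auto
  qed
  then have "(\<Sum>w\<in>V - D. mdeg w) = (\<Sum>z\<in>matched. \<Delta> - 1)"
    unfolding mdeg_def using finite_V finite_matched by (intro sum_multicount_gen) auto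
  also have "\<dots> = 2 * card half * (\<Delta> - 1)"
    using card_matched by simp
  finally show ?thesis .
qed

lemma card_outside_non_candidates: "card (V - D - candidates) \<le> card isolated * \<Delta>"
proof -
  have "V - D - candidates \<subseteq> (\<Union>z\<in>isolated. {u\<in>V. E z u})"
    unfolding candidates_def using edge_sym by auto
  moreover have "finite (\<Union>z\<in>isolated. {u\<in>V. E z u})"
    by (rule finite_subset[OF _ finite_V]) auto
  ultimately have "card (V - D - candidates) \<le> card (\<Union>z\<in>isolated. {u\<in>V. E z u})"
    by (rule card_mono[rotated])
  also have "\<dots> \<le> (\<Sum>z\<in>isolated. card {u\<in>V. E z u})"
    by (rule card_UN_le) (use finite_D in \<open>simp add: isolated_def\<close>)
  also have "\<dots> = (\<Sum>z\<in>isolated. \<Delta>)"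
    using card_nbrs D_subset_V unfolding isolated_def by (intro sum.cong) auto
  also have "\<dots> = card isolated * \<Delta>" by simp
  finally show ?thesis .
qed

lemma mdeg_non_candidate: "w \<in> V - D - candidates \<Longrightarrow> mdeg w \<le> \<Delta> - 1"
proof -
  assume w: "w \<in> V - D - candidates"
  then obtain z where z: "E w z" "z \<in> isolated" unfolding candidates_def by auto
  have "{z'\<in>matched. E w z'} \<subseteq> {u\<in>V. E w u} - {z}"
    using matched_subset_D D_subset_V z unfolding matched_def by auto
  then have "mdeg w \<le> card ({u\<in>V. E w u} - {z})"
    unfolding mdeg_def using finite_V by (intro card_mono) auto
  also have "\<dots> = \<Delta> - 1"
    using z edge_in_V card_nbrs w by simp
  finally show ?thesis .
qed

lemma sum_mdeg_candidates:
  "2 * card half * (\<Delta> - 1) \<le> (\<Sum>w\<in>candidates. mdeg w) + card isolated * \<Delta> * (\<Delta> - 1)"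
proof -
  have "candidates \<subseteq> V - D" unfolding candidates_def by auto
  then have "(\<Sum>w\<in>V - D. mdeg w) = (\<Sum>w\<in>V - D - candidates. mdeg w) + (\<Sum>w\<in>candidates. mdeg w)"
    using finite_V by (intro sum.subset_diff) auto
  also have "(\<Sum>w\<in>V - D - candidates. mdeg w) \<le> (\<Sum>w\<in>V - D - candidates. \<Delta> - 1)"
    by (rule sum_mono) (rule mdeg_non_candidate)
  also have "\<dots> = card (V - D - candidates) * (\<Delta> - 1)" by simp
  also have "\<dots> \<le> card isolated * \<Delta> * (\<Delta> - 1)"
    using card_outside_non_candidates by simp
  finally show ?thesis using sum_mdeg_outside by simp
qed

lemma alpha_ge_dissociation:
  assumes "\<Delta> \<ge> 3"
  shows "1/2 * (1 + (real \<Delta> - 1) * (real \<Delta> + 1) /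
                (2 ^ \<Delta> * (real \<Delta>)^2 + (real \<Delta> - 1) * (real \<Delta> + 1))) * real (card D)
    \<le> real (alpha V E)"
proof -
  define x where "x = real (card isolated)"
  define m where "m = real (card half)"
  define d where "d = real \<Delta>"
  define P :: real where "P = 2 ^ \<Delta>"
  have d: "d \<ge> 3" and d_minus: "real (\<Delta> - 1) = d - 1"
    using assms unfolding d_def by (auto simp: of_nat_diff)
  have "real (4 * (\<Delta> - 1)) \<le> real ((2::nat) ^ \<Delta>)"
    using four_mult_le_power_two[OF assms] by (simp only: of_nat_le_iff)
  then have P: "4 * (d - 1) \<le> P" unfolding P_def d_minus[symmetric] by simp
  have "real (2 * card half * (\<Delta> - 1))
      \<le> real ((\<Sum>w\<in>candidates. mdeg w) + card isolated * \<Delta> * (\<Delta> - 1))"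
    using sum_mdeg_candidates by (simp only: of_nat_le_iff)
  then have "2 * m * (d - 1) \<le> (\<Sum>w\<in>candidates. real (mdeg w)) + x * d * (d - 1)"
    unfolding x_def m_def d_def using assms by (simp add: of_nat_diff)
  then have "2 * m * (d - 1) - x * d * (d - 1) \<le> (\<Sum>w\<in>candidates. real (mdeg w))"
    by linarith
  moreover have "P * d > 0" using d unfolding P_def by simp
  ultimately have "(2 * m * (d - 1) - x * d * (d - 1)) / (P * d)
      \<le> (\<Sum>w\<in>candidates. real (mdeg w) / (2 ^ \<Delta> * real \<Delta>))"
    unfolding P_def d_def by (simp add: divide_right_mono flip: sum_divide_distrib)
  also have "\<dots> \<le> (\<Sum>w\<in>candidates. 1 / ((real (\<Delta> - mdeg w) + 1) * 2 ^ mdeg w))"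
    using degree_weight_bound mdeg_le assms unfolding candidates_def by (intro sum_mono) auto
  finally have "x + m + (2 * m * (d - 1) - x * d * (d - 1)) / (P * d) \<le> real (alpha V E)"
    using alpha_ge_average unfolding x_def m_def by linarith
  from dissociation_coefficient_le[OF d P _ _ this] card_D
  show ?thesis unfolding x_def m_def d_def P_def by simp
qed

end

theorem theorem2:
  fixes V :: "'a set" and E :: "'a \<Rightarrow> 'a \<Rightarrow> bool" and \<Delta> :: nat
  assumes "simple_graph V E"
    and "\<Delta> \<ge> 3"
    and "triangle_free V E"
    and "regular V E \<Delta>"
  shows "real (alpha V E) \<ge>
    1/2 * (1 + (real \<Delta> - 1) * (real \<Delta> + 1) /
                (2 ^ \<Delta> * (real \<Delta>)^2 + (real \<Delta> - 1) * (real \<Delta> + 1)))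
        * real (diss V E)"
proof -
  interpret tf_regular_graph V E \<Delta>
    using assms by unfold_locales
  obtain D where D: "dissociation_set V E D" "card D = diss V E"
    by (rule diss_attained)
  interpret tf_regular_dissociation V E \<Delta> D
    using D(1) by unfold_locales
  show ?thesis using alpha_ge_dissociation[OF assms(2)] D(2) by simp
qed

end
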